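(* Consider the cyclically closed $2\times2\times M$ Ising-type model described in the context, with real couplings $J_1,\dots,J_5$, temperature $T>0$ and $\beta=1/(k_BT)$. Set $p_1=e^{\beta J_1}$, $q_1=e^{\beta J_2}$, $q_2=e^{2\beta J_3}$, $u_1=e^{\beta J_4}$, $v_1=e^{4\beta J_5}$ and $$\lambda_{\max}=4p_1^2u_1^{-2}v_1^{-1}+4u_1^2p_1^{-2}v_1^{-1}+4v_1q_2^{-2}+2q_2^2v_1q_1^{-4}+q_1^4q_2^2v_1p_1^{-4}u_1^{-4}+p_1^4q_1^4q_2^2u_1^4v_1 .$$ Then the free energy per site $f(T)=-k_BT\lim_{M\to\infty}\frac{1}{4M}\ln Z_M$ equals $-\frac{k_BT}{4}\ln\lambda_{\max}$, the internal energy per site $u(T)=-T^2\partial_T[f/T]$ equals $k_BT^2\partial_T[\frac14\ln\lambda_{\max}]$, and the heat capacity per site $C=\partial_T u$ equals $2k_BT\partial_T[\frac14\ln\lambda_{\max}]+k_BT^2\partial_T^2[\frac14\ln\lambda_{\max}]$.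
   Context: Sites $t_i^m$, $i\in\{0,1,2,3\}$ (indices mod 4), $m\in\{0,\dots,M-1\}$, cyclically closed ($t_i^M\equiv t_i^0$), spins $\sigma_i^m\in\{-1,1\}$. The cube energy is $$\mathcal H^m=-\sum_{r=0}^{3}\Big(J_1\sigma_r^m\sigma_r^{m+1}+J_2\sigma_r^m\sigma_{r+1}^m\sigma_r^{m+1}\sigma_{r+1}^{m+1}+J_3\sigma_r^m\sigma_{r+2}^m\sigma_r^{m+1}\sigma_{r+2}^{m+1}+J_4\prod_{i\ne r}\sigma_i^m\sigma_i^{m+1}+J_5\prod_{i=0}^3\sigma_i^m\sigma_i^{m+1}\Big),$$ $\mathcal H=\sum_{m=0}^{M-1}\mathcal H^m$, and $Z_M=\sum_{\sigma\in\{-1,1\}^{4M}}e^{-\beta\mathcal H(\sigma)}$. *)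

theory Defs
  imports "HOL-Analysis.Analysis"
begin

text \<open>Indices are read modulo 4 (in i) and modulo M (in m),
  which implements the cyclic closure t_i^M = t_i^0.\<close>

definition configs :: "nat \<Rightarrow> (nat \<times> nat \<Rightarrow> real) set" where
  "configs M = Pi\<^sub>E ({..<4::nat} \<times> {..<M}) (\<lambda>_. {-1, 1})"

definition spin :: "nat \<Rightarrow> (nat \<times> nat \<Rightarrow> real) \<Rightarrow> nat \<Rightarrow> nat \<Rightarrow> real" where
  "spin M \<sigma> i m = \<sigma> (i mod 4, m mod M)"

definition cube_energy ::
  "real \<Rightarrow> real \<Rightarrow> real \<Rightarrow> real \<Rightarrow> real \<Rightarrow> nat \<Rightarrow> (nat \<times> nat \<Rightarrow> real) \<Rightarrow> nat \<Rightarrow> real" where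
  "cube_energy J1 J2 J3 J4 J5 M \<sigma> m =
     - (\<Sum>r<4.
          J1 * spin M \<sigma> r m * spin M \<sigma> r (m+1)
        + J2 * spin M \<sigma> r m * spin M \<sigma> (r+1) m * spin M \<sigma> r (m+1) * spin M \<sigma> (r+1) (m+1)
        + J3 * spin M \<sigma> r m * spin M \<sigma> (r+2) m * spin M \<sigma> r (m+1) * spin M \<sigma> (r+2) (m+1)
        + J4 * (\<Prod>i\<in>{..<4} - {r}. spin M \<sigma> i m * spin M \<sigma> i (m+1))
        + J5 * (\<Prod>i<4. spin M \<sigma> i m * spin M \<sigma> i (m+1)))"

definition energy ::
  "real \<Rightarrow> real \<Rightarrow> real \<Rightarrow> real \<Rightarrow> real \<Rightarrow> nat \<Rightarrow> (nat \<times> nat \<Rightarrow> real) \<Rightarrow> real" where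
  "energy J1 J2 J3 J4 J5 M \<sigma> = (\<Sum>m<M. cube_energy J1 J2 J3 J4 J5 M \<sigma> m)"

definition partition ::
  "real \<Rightarrow> real \<Rightarrow> real \<Rightarrow> real \<Rightarrow> real \<Rightarrow> real \<Rightarrow> real \<Rightarrow> nat \<Rightarrow> real" where
  "partition kB J1 J2 J3 J4 J5 T M =
     (\<Sum>\<sigma>\<in>configs M. exp (- (1 / (kB * T)) * energy J1 J2 J3 J4 J5 M \<sigma>))"

definition lambda_max ::
  "real \<Rightarrow> real \<Rightarrow> real \<Rightarrow> real \<Rightarrow> real \<Rightarrow> real \<Rightarrow> real \<Rightarrow> real" where
  "lambda_max kB J1 J2 J3 J4 J5 T =
     (let \<beta> = 1 / (kB * T);
          p1 = exp (\<beta> * J1); q1 = exp (\<beta> * J2); q2 = exp (2 * \<beta> * J3);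
          u1 = exp (\<beta> * J4); v1 = exp (4 * \<beta> * J5)
      in 4 * p1^2 / (u1^2 * v1) + 4 * u1^2 / (p1^2 * v1) + 4 * v1 / q2^2
         + 2 * q2^2 * v1 / q1^4 + q1^4 * q2^2 * v1 / (p1^4 * u1^4)
         + p1^4 * q1^4 * q2^2 * u1^4 * v1)"

definition free_energy ::
  "real \<Rightarrow> real \<Rightarrow> real \<Rightarrow> real \<Rightarrow> real \<Rightarrow> real \<Rightarrow> real \<Rightarrow> real" where
  "free_energy kB J1 J2 J3 J4 J5 T =
     - kB * T * lim (\<lambda>M. ln (partition kB J1 J2 J3 J4 J5 T M) / (4 * real M))"

definition internal_energy ::
  "real \<Rightarrow> real \<Rightarrow> real \<Rightarrow> real \<Rightarrow> real \<Rightarrow> real \<Rightarrow> real \<Rightarrow> real" where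
  "internal_energy kB J1 J2 J3 J4 J5 T =
     - (T^2) * deriv (\<lambda>t. free_energy kB J1 J2 J3 J4 J5 t / t) T"

definition heat_capacity ::
  "real \<Rightarrow> real \<Rightarrow> real \<Rightarrow> real \<Rightarrow> real \<Rightarrow> real \<Rightarrow> real \<Rightarrow> real" where
  "heat_capacity kB J1 J2 J3 J4 J5 T = deriv (internal_energy kB J1 J2 J3 J4 J5) T"

end

theory Submission
  imports Defs
begin

(* The Boltzmann weight of the m-th cube depends on the layers sigma^m and sigma^(m+1) only
   through the products tau_i = sigma_i^m sigma_i^(m+1).  Hence the transfer matrix
   W(x, y) = w(x y) on the 16 spin columns is a convolution on the group {-1,1}^4, and all its
   row sums equal sum_tau w(tau), which is lambda_max; no Perron-Frobenius argument is needed.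
   Summing over open chains of columns gives exactly 16 lambda_max^n, and closing the chain costs
   a factor between min w and lambda_max, so ln Z_M / M tends to ln lambda_max.  The
   thermodynamic formulas then follow by differentiating f(T) = - k_B T ln lambda_max / 4, where
   lambda_max, a finite sum of exponentials exp (- E / (k_B T)), is smooth for T > 0. *)

definition sign_vectors :: "'i set \<Rightarrow> ('i \<Rightarrow> real) set" where
  "sign_vectors I = Pi\<^sub>E I (\<lambda>_. {-1, 1})"

lemma sum_PiE_insert:
  assumes "x \<notin> S"
  shows "(\<Sum>g\<in>Pi\<^sub>E (insert x S) T. f g) = (\<Sum>y\<in>T x. \<Sum>g\<in>Pi\<^sub>E S T. f (g(x := y)))"
  unfolding PiE_insert_eq
  by (subst sum.reindex[OF inj_combinator[OF assms]]) (simp add: sum.cartesian_product split_def)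

lemma sum_paths_const_row_sums:
  fixes W :: "'a \<Rightarrow> 'a \<Rightarrow> 'b::comm_semiring_1"
  assumes "finite S" and row_sum: "\<And>x. x \<in> S \<Longrightarrow> (\<Sum>y\<in>S. W x y) = \<Lambda>"
  shows "(\<Sum>c\<in>Pi\<^sub>E {..<Suc n} (\<lambda>_. S). \<Prod>m<n. W (c m) (c (Suc m))) = of_nat (card S) * \<Lambda> ^ n"
proof (induction n)
  case 0
  then show ?case by (simp add: card_PiE)
next
  case (Suc n)
  let ?C = "Pi\<^sub>E {..<Suc n} (\<lambda>_. S)"
  let ?path = "\<lambda>c. \<Prod>m<n. W (c m) (c (Suc m))"
  have "{..<Suc (Suc n)} = insert (Suc n) {..<Suc n}" by auto
  then have "(\<Sum>c\<in>Pi\<^sub>E {..<Suc (Suc n)} (\<lambda>_. S). \<Prod>m<Suc n. W (c m) (c (Suc m)))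
      = (\<Sum>y\<in>S. \<Sum>c\<in>?C. \<Prod>m<Suc n. W ((c(Suc n := y)) m) ((c(Suc n := y)) (Suc m)))"
    by (simp add: sum_PiE_insert)
  also have "\<dots> = (\<Sum>y\<in>S. \<Sum>c\<in>?C. ?path c * W (c n) y)"
    by (intro sum.cong refl) (simp add: prod.lessThan_Suc)
  also have "\<dots> = (\<Sum>c\<in>?C. ?path c * (\<Sum>y\<in>S. W (c n) y))"
    by (subst sum.swap) (simp add: sum_distrib_left)
  also have "\<dots> = (\<Sum>c\<in>?C. ?path c * \<Lambda>)"
    by (intro sum.cong refl) (auto simp: row_sum PiE_iff)
  also have "\<dots> = (\<Sum>c\<in>?C. ?path c) * \<Lambda>"
    by (rule sum_distrib_right[symmetric])
  also have "\<dots> = of_nat (card S) * \<Lambda> ^ Suc n"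
    by (simp add: Suc.IH mult_ac)
  finally show ?case .
qed

lemma sum_cycles_bounds:
  fixes W :: "'a \<Rightarrow> 'a \<Rightarrow> real" and w \<Lambda> :: real and n :: nat
  assumes "finite S" and row_sum: "\<And>x. x \<in> S \<Longrightarrow> (\<Sum>y\<in>S. W x y) = \<Lambda>"
    and lower: "\<And>x y. x \<in> S \<Longrightarrow> y \<in> S \<Longrightarrow> w \<le> W x y" and "0 \<le> w"
  defines "Z \<equiv> \<Sum>c\<in>Pi\<^sub>E {..<Suc n} (\<lambda>_. S). \<Prod>m<Suc n. W (c m) (c (Suc m mod Suc n))"
  shows "real (card S) * w * \<Lambda> ^ n \<le> Z" and "Z \<le> real (card S) * \<Lambda> ^ Suc n"
proof -
  let ?C = "Pi\<^sub>E {..<Suc n} (\<lambda>_. S)"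
  let ?path = "\<lambda>c. \<Prod>m<n. W (c m) (c (Suc m))"
  have W_nonneg: "0 \<le> W x y" if "x \<in> S" "y \<in> S" for x y
    using lower[OF that] \<open>0 \<le> w\<close> by linarith
  have W_le: "W x y \<le> \<Lambda>" if "x \<in> S" "y \<in> S" for x y
    using member_le_sum[of y S "W x"] row_sum[OF that(1)] that W_nonneg \<open>finite S\<close> by simp
  have mem: "c m \<in> S" if "c \<in> ?C" "m \<le> n" for c m
    using PiE_mem[OF that(1)] that(2) by simp
  have path_nonneg: "0 \<le> ?path c" if "c \<in> ?C" for c
    using mem[OF that] by (intro prod_nonneg W_nonneg) auto
  have "(\<Prod>m<n. W (c m) (c (Suc m mod Suc n))) = ?path c" for c
    by (intro prod.cong refl) simp
  then have Z_eq: "Z = (\<Sum>c\<in>?C. ?path c * W (c n) (c 0))"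
    unfolding Z_def by (simp add: prod.lessThan_Suc)
  have "(\<Sum>c\<in>?C. ?path c) = real (card S) * \<Lambda> ^ n"
    using \<open>finite S\<close> row_sum by (rule sum_paths_const_row_sums)
  then have paths: "(\<Sum>c\<in>?C. ?path c * v) = real (card S) * \<Lambda> ^ n * v" for v
    by (simp add: sum_distrib_right[symmetric])
  have "real (card S) * w * \<Lambda> ^ n = (\<Sum>c\<in>?C. ?path c * w)"
    by (simp add: paths)
  also have "\<dots> \<le> Z"
    unfolding Z_eq by (intro sum_mono mult_left_mono lower mem path_nonneg) auto
  finally show "real (card S) * w * \<Lambda> ^ n \<le> Z" .
  have "Z \<le> (\<Sum>c\<in>?C. ?path c * \<Lambda>)"
    unfolding Z_eq by (intro sum_mono mult_left_mono W_le mem path_nonneg) auto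
  also have "\<dots> = real (card S) * \<Lambda> ^ Suc n"
    by (simp add: paths)
  finally show "Z \<le> real (card S) * \<Lambda> ^ Suc n" .
qed

lemma affine_over_length_tendsto:
  "(\<lambda>n. (c + real (Suc n) * x) / real (Suc n)) \<longlonglongrightarrow> (x::real)"
proof -
  have "(\<lambda>n. c / real (Suc n) + x) \<longlonglongrightarrow> 0 + x"
    by (intro tendsto_add LIMSEQ_Suc[OF lim_const_over_n] tendsto_const)
  then show ?thesis
    by (simp add: add_divide_distrib del: of_nat_Suc)
qed

lemma ln_over_length_tendsto:
  fixes Z :: "nat \<Rightarrow> real"
  assumes "0 < a" "0 < \<Lambda>"
    and lower: "\<And>n. a * \<Lambda> ^ n \<le> Z (Suc n)" and upper: "\<And>n. Z (Suc n) \<le> b * \<Lambda> ^ Suc n"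
  shows "(\<lambda>M. ln (Z M) / real M) \<longlonglongrightarrow> ln \<Lambda>"
proof -
  have Z_pos: "0 < Z (Suc n)" for n
    by (rule less_le_trans[OF _ lower]) (simp add: assms(1,2))
  have "0 < b * \<Lambda>"
    using Z_pos[of 0] upper[of 0] by simp
  then have "0 < b"
    using \<open>0 < \<Lambda>\<close> by (simp add: zero_less_mult_iff)
  have ln_lower: "ln a - ln \<Lambda> + real (Suc n) * ln \<Lambda> \<le> ln (Z (Suc n))" for n
  proof -
    have "ln (a * \<Lambda> ^ n) \<le> ln (Z (Suc n))"
      using lower[of n] Z_pos[of n] assms(1,2) by simp
    then show ?thesis
      using assms(1,2) by (simp add: ln_mult ln_realpow algebra_simps)
  qed
  have ln_upper: "ln (Z (Suc n)) \<le> ln b + real (Suc n) * ln \<Lambda>" for n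
  proof -
    have "ln (Z (Suc n)) \<le> ln (b * \<Lambda> ^ Suc n)"
      using upper[of n] Z_pos[of n] by simp
    then show ?thesis
      using \<open>0 < b\<close> \<open>0 < \<Lambda>\<close> by (simp add: ln_mult ln_realpow algebra_simps)
  qed
  have "(\<lambda>n. ln (Z (Suc n)) / real (Suc n)) \<longlonglongrightarrow> ln \<Lambda>"
  proof (rule tendsto_sandwich[OF _ _ affine_over_length_tendsto affine_over_length_tendsto])
    show "\<forall>\<^sub>F n in sequentially.
            (ln a - ln \<Lambda> + real (Suc n) * ln \<Lambda>) / real (Suc n) \<le> ln (Z (Suc n)) / real (Suc n)"
      using ln_lower by (intro always_eventually allI divide_right_mono) auto
    show "\<forall>\<^sub>F n in sequentially.
            ln (Z (Suc n)) / real (Suc n) \<le> (ln b + real (Suc n) * ln \<Lambda>) / real (Suc n)"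
      using ln_upper by (intro always_eventually allI divide_right_mono) auto
  qed
  then show ?thesis
    by (rule LIMSEQ_imp_Suc)
qed

theorem ln_cycle_sum_over_length_tendsto:
  fixes W :: "'a \<Rightarrow> 'a \<Rightarrow> real"
  assumes "finite S" "S \<noteq> {}"
    and pos: "\<And>x y. x \<in> S \<Longrightarrow> y \<in> S \<Longrightarrow> 0 < W x y"
    and row_sum: "\<And>x. x \<in> S \<Longrightarrow> (\<Sum>y\<in>S. W x y) = \<Lambda>"
  shows "(\<lambda>M. ln (\<Sum>c\<in>Pi\<^sub>E {..<M} (\<lambda>_. S). \<Prod>m<M. W (c m) (c (Suc m mod M))) / real M)
           \<longlonglongrightarrow> ln \<Lambda>"
proof -
  define w where "w = Min (case_prod W ` (S \<times> S))"
  have "0 < w"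
    unfolding w_def using assms(1,2) pos by (subst Min_gr_iff) auto
  have w_le: "w \<le> W x y" if "x \<in> S" "y \<in> S" for x y
    unfolding w_def using assms(1) that by (intro Min_le) auto
  obtain x where "x \<in> S"
    using assms(2) by blast
  then have "0 < \<Lambda>"
    using row_sum[of x] pos assms(1,2) by (metis sum_pos)
  have "0 < card S"
    using assms(1,2) by (simp add: card_gt_0_iff)
  show ?thesis
    by (rule ln_over_length_tendsto[where a = "card S * w" and b = "card S"])
       (use \<open>0 < card S\<close> \<open>0 < w\<close> \<open>0 < \<Lambda>\<close> sum_cycles_bounds[OF assms(1) row_sum w_le]
        in \<open>auto simp: less_imp_le\<close>)
qed

lemma finite_sign_vectors: "finite I \<Longrightarrow> finite (sign_vectors I)"
  unfolding sign_vectors_def by (simp add: finite_PiE)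

lemma sign_vectors_nonempty: "sign_vectors I \<noteq> {}"
  unfolding sign_vectors_def by (simp add: PiE_eq_empty_iff)

lemma sum_sign_vectors_mult_invariant:
  assumes "x \<in> sign_vectors I"
  shows "(\<Sum>y\<in>sign_vectors I. f (restrict (\<lambda>i. x i * y i) I)) = (\<Sum>y\<in>sign_vectors I. f y)"
proof -
  let ?flip = "\<lambda>y. restrict (\<lambda>i. x i * y i) I"
  have x_sq: "x i * (x i * a) = a" if "i \<in> I" for i a
    using assms that unfolding sign_vectors_def by (auto simp: PiE_iff)
  have flip_flip: "?flip (?flip y) = y" if "y \<in> sign_vectors I" for y
    using that x_sq unfolding sign_vectors_def by (auto simp: fun_eq_iff PiE_iff extensional_def)
  have flip_mem: "?flip y \<in> sign_vectors I" if "y \<in> sign_vectors I" for y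
  proof -
    have "x i * y i \<in> {-1, 1}" if "i \<in> I" for i
      using PiE_mem[OF assms[unfolded sign_vectors_def] that]
        PiE_mem[OF \<open>y \<in> sign_vectors I\<close>[unfolded sign_vectors_def] that] by auto
    then show ?thesis
      unfolding sign_vectors_def by auto
  qed
  show ?thesis
    by (rule sum.reindex_bij_witness[of _ ?flip ?flip]) (blast intro: flip_flip flip_mem)+
qed

lemma sum_sign_vectors_4:
  "(\<Sum>\<tau>\<in>sign_vectors {..<4::nat}. F (\<tau> 0) (\<tau> 1) (\<tau> 2) (\<tau> 3)) =
     (\<Sum>d\<in>{-1,1}. \<Sum>c\<in>{-1,1}. \<Sum>b\<in>{-1,1}. \<Sum>a\<in>{-1,1}. F a b c d)"
proof -
  have "{..<4::nat} = insert 3 (insert 2 (insert 1 {0}))" by auto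
  then show ?thesis
    unfolding sign_vectors_def by (simp add: sum_PiE_insert)
qed

definition layer_energy :: "real \<Rightarrow> real \<Rightarrow> real \<Rightarrow> real \<Rightarrow> real \<Rightarrow> (nat \<Rightarrow> real) \<Rightarrow> real" where
  "layer_energy J1 J2 J3 J4 J5 \<tau> = - (\<Sum>r<4.
      J1 * \<tau> r + J2 * \<tau> r * \<tau> ((r + 1) mod 4) + J3 * \<tau> r * \<tau> ((r + 2) mod 4)
    + J4 * (\<Prod>i\<in>{..<4} - {r}. \<tau> i) + J5 * (\<Prod>i<4. \<tau> i))"

lemma cube_energy_eq_layer_energy:
  "cube_energy J1 J2 J3 J4 J5 M \<sigma> m =
     layer_energy J1 J2 J3 J4 J5 (\<lambda>i. spin M \<sigma> i m * spin M \<sigma> i (m + 1))"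
  unfolding cube_energy_def layer_energy_def spin_def by (simp add: prod.distrib mult_ac)

lemma layer_energy_cong:
  "(\<And>i. i < 4 \<Longrightarrow> \<tau> i = \<tau>' i) \<Longrightarrow>
     layer_energy J1 J2 J3 J4 J5 \<tau> = layer_energy J1 J2 J3 J4 J5 \<tau>'"
  unfolding layer_energy_def by (intro arg_cong[where f=uminus] sum.cong prod.cong refl) auto

lemma layer_energy_expand:
  "layer_energy J1 J2 J3 J4 J5 \<tau> = - (J1 * (\<tau> 0 + \<tau> 1 + \<tau> 2 + \<tau> 3)
     + J2 * (\<tau> 0 * \<tau> 1 + \<tau> 1 * \<tau> 2 + \<tau> 2 * \<tau> 3 + \<tau> 3 * \<tau> 0)
     + 2 * J3 * (\<tau> 0 * \<tau> 2 + \<tau> 1 * \<tau> 3)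
     + J4 * (\<tau> 1 * \<tau> 2 * \<tau> 3 + \<tau> 0 * \<tau> 2 * \<tau> 3 + \<tau> 0 * \<tau> 1 * \<tau> 3 + \<tau> 0 * \<tau> 1 * \<tau> 2)
     + 4 * J5 * (\<tau> 0 * \<tau> 1 * \<tau> 2 * \<tau> 3))"
proof -
  have "{..<4::nat} = {0,1,2,3}" "{..<4::nat} - {0} = {1,2,3}" "{..<4::nat} - {1} = {0,2,3}"
       "{..<4::nat} - {2} = {0,1,3}" "{..<4::nat} - {3} = {0,1,2}" by auto
  then show ?thesis
    unfolding layer_energy_def by simp (simp add: numeral_2_eq_2 numeral_3_eq_3 algebra_simps)
qed

lemma lambda_max_eq_sum:
  "lambda_max kB J1 J2 J3 J4 J5 T =
     (\<Sum>\<tau>\<in>sign_vectors {..<4}. exp (- (1 / (kB * T)) * layer_energy J1 J2 J3 J4 J5 \<tau>))"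
proof -
  define \<beta> where "\<beta> = 1 / (kB * T)"
  have "(\<Sum>\<tau>\<in>sign_vectors {..<4}. exp (- \<beta> * layer_energy J1 J2 J3 J4 J5 \<tau>)) =
    (\<Sum>d\<in>{-1,1}. \<Sum>c\<in>{-1,1}. \<Sum>b\<in>{-1,1}. \<Sum>a\<in>{-1,1}. exp (\<beta> * (J1 * (a + b + c + d)
     + J2 * (a * b + b * c + c * d + d * a) + 2 * J3 * (a * c + b * d)
     + J4 * (b * c * d + a * c * d + a * b * d + a * b * c) + 4 * J5 * (a * b * c * d))))"
    unfolding layer_energy_expand mult_minus_left mult_minus_right minus_minus
    by (rule sum_sign_vectors_4)
  also have "\<dots> = 4 * exp (\<beta> * (2 * J1 - 2 * J4 - 4 * J5)) + 4 * exp (\<beta> * (2 * J4 - 2 * J1 - 4 * J5))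
      + 4 * exp (\<beta> * (4 * J5 - 4 * J3)) + 2 * exp (\<beta> * (4 * J3 + 4 * J5 - 4 * J2))
      + exp (\<beta> * (4 * J2 + 4 * J3 + 4 * J5 - 4 * J1 - 4 * J4))
      + exp (\<beta> * (4 * J1 + 4 * J2 + 4 * J3 + 4 * J4 + 4 * J5))"
    by (simp add: algebra_simps)
  also have "\<dots> = lambda_max kB J1 J2 J3 J4 J5 T"
    unfolding lambda_max_def Let_def \<beta>_def[symmetric]
    by (simp add: exp_of_nat_mult[symmetric] exp_add[symmetric] exp_diff[symmetric] algebra_simps)
       (simp add: exp_diff)
  finally show ?thesis
    unfolding \<beta>_def by simp
qed

definition transfer_weight ::
  "real \<Rightarrow> real \<Rightarrow> real \<Rightarrow> real \<Rightarrow> real \<Rightarrow> real \<Rightarrow> (nat \<Rightarrow> real) \<Rightarrow> (nat \<Rightarrow> real) \<Rightarrow> real" where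
  "transfer_weight \<beta> J1 J2 J3 J4 J5 x y = exp (- \<beta> * layer_energy J1 J2 J3 J4 J5 (\<lambda>i. x i * y i))"

lemma transfer_weight_row_sum:
  assumes "x \<in> sign_vectors {..<4}"
  shows "(\<Sum>y\<in>sign_vectors {..<4}. transfer_weight (1 / (kB * T)) J1 J2 J3 J4 J5 x y)
           = lambda_max kB J1 J2 J3 J4 J5 T"
proof -
  let ?w = "\<lambda>\<tau>. exp (- (1 / (kB * T)) * layer_energy J1 J2 J3 J4 J5 \<tau>)"
  have "transfer_weight (1 / (kB * T)) J1 J2 J3 J4 J5 x y = ?w (restrict (\<lambda>i. x i * y i) {..<4})" for y
  proof -
    have "layer_energy J1 J2 J3 J4 J5 (\<lambda>i. x i * y i)
        = layer_energy J1 J2 J3 J4 J5 (restrict (\<lambda>i. x i * y i) {..<4})"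
      by (rule layer_energy_cong) simp
    then show ?thesis
      by (simp only: transfer_weight_def)
  qed
  then have "(\<Sum>y\<in>sign_vectors {..<4}. transfer_weight (1 / (kB * T)) J1 J2 J3 J4 J5 x y)
      = (\<Sum>y\<in>sign_vectors {..<4}. ?w (restrict (\<lambda>i. x i * y i) {..<4}))"
    by (intro sum.cong refl)
  also have "\<dots> = (\<Sum>\<tau>\<in>sign_vectors {..<4}. ?w \<tau>)"
    by (rule sum_sign_vectors_mult_invariant[OF assms, where f = ?w])
  finally show ?thesis
    unfolding lambda_max_eq_sum .
qed

lemma transfer_weight_pos: "0 < transfer_weight \<beta> J1 J2 J3 J4 J5 x y"
  unfolding transfer_weight_def by simp

definition configs_of_columns :: "nat \<Rightarrow> (nat \<Rightarrow> nat \<Rightarrow> real) \<Rightarrow> (nat \<times> nat \<Rightarrow> real)" where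
  "configs_of_columns M c = restrict (\<lambda>(i, m). c m i) ({..<4} \<times> {..<M})"

lemma bij_betw_configs_of_columns:
  "bij_betw (configs_of_columns M) (Pi\<^sub>E {..<M} (\<lambda>_. sign_vectors {..<4})) (configs M)"
proof (rule bij_betw_byWitness[where f' = "\<lambda>\<sigma>. \<lambda>m\<in>{..<M}. \<lambda>i\<in>{..<4}. \<sigma> (i, m)"])
  show "\<forall>c\<in>Pi\<^sub>E {..<M} (\<lambda>_. sign_vectors {..<4}).
          (\<lambda>m\<in>{..<M}. \<lambda>i\<in>{..<4}. configs_of_columns M c (i, m)) = c"
    unfolding configs_of_columns_def sign_vectors_def
    by (auto simp: fun_eq_iff PiE_iff extensional_def)
  show "\<forall>\<sigma>\<in>configs M. configs_of_columns M (\<lambda>m\<in>{..<M}. \<lambda>i\<in>{..<4}. \<sigma> (i, m)) = \<sigma>"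
    unfolding configs_of_columns_def configs_def
    by (auto simp: fun_eq_iff PiE_iff extensional_def)
  show "configs_of_columns M ` Pi\<^sub>E {..<M} (\<lambda>_. sign_vectors {..<4}) \<subseteq> configs M"
    unfolding configs_of_columns_def configs_def sign_vectors_def by (force simp: PiE_iff)
  show "(\<lambda>\<sigma>. \<lambda>m\<in>{..<M}. \<lambda>i\<in>{..<4}. \<sigma> (i, m)) ` configs M
          \<subseteq> Pi\<^sub>E {..<M} (\<lambda>_. sign_vectors {..<4})"
    unfolding configs_def sign_vectors_def by (auto simp: PiE_iff)
qed

lemma boltzmann_weight_configs_of_columns:
  assumes "0 < M" "c \<in> Pi\<^sub>E {..<M} (\<lambda>_. sign_vectors {..<4})"
  shows "exp (- \<beta> * energy J1 J2 J3 J4 J5 M (configs_of_columns M c))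
           = (\<Prod>m<M. transfer_weight \<beta> J1 J2 J3 J4 J5 (c m) (c (Suc m mod M)))"
proof -
  have spin: "spin M (configs_of_columns M c) i m = c (m mod M) i" if "i < 4" for i m
    using that \<open>0 < M\<close> by (simp add: spin_def configs_of_columns_def)
  have "cube_energy J1 J2 J3 J4 J5 M (configs_of_columns M c) m
          = layer_energy J1 J2 J3 J4 J5 (\<lambda>i. c m i * c (Suc m mod M) i)" if "m < M" for m
    unfolding cube_energy_eq_layer_energy using that by (intro layer_energy_cong) (simp add: spin)
  then have "(\<Prod>m<M. exp (- \<beta> * cube_energy J1 J2 J3 J4 J5 M (configs_of_columns M c) m))
      = (\<Prod>m<M. transfer_weight \<beta> J1 J2 J3 J4 J5 (c m) (c (Suc m mod M)))"
    by (intro prod.cong refl) (simp add: transfer_weight_def)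
  then show ?thesis
    unfolding energy_def sum_distrib_left exp_sum[OF finite_lessThan] .
qed

lemma partition_eq_cycle_sum:
  assumes "0 < M"
  shows "partition kB J1 J2 J3 J4 J5 T M =
    (\<Sum>c\<in>Pi\<^sub>E {..<M} (\<lambda>_. sign_vectors {..<4}).
       \<Prod>m<M. transfer_weight (1 / (kB * T)) J1 J2 J3 J4 J5 (c m) (c (Suc m mod M)))"
  unfolding partition_def sum.reindex_bij_betw[OF bij_betw_configs_of_columns, symmetric]
  using assms by (intro sum.cong refl boltzmann_weight_configs_of_columns)

lemma ln_partition_over_length_tendsto:
  "(\<lambda>M. ln (partition kB J1 J2 J3 J4 J5 T M) / real M) \<longlonglongrightarrow> ln (lambda_max kB J1 J2 J3 J4 J5 T)"
proof -
  have "(\<lambda>M. ln (\<Sum>c\<in>Pi\<^sub>E {..<M} (\<lambda>_. sign_vectors {..<4}).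
       \<Prod>m<M. transfer_weight (1 / (kB * T)) J1 J2 J3 J4 J5 (c m) (c (Suc m mod M))) / real M)
      \<longlonglongrightarrow> ln (lambda_max kB J1 J2 J3 J4 J5 T)"
    by (rule ln_cycle_sum_over_length_tendsto)
       (auto simp: finite_sign_vectors sign_vectors_nonempty transfer_weight_row_sum transfer_weight_pos)
  then show ?thesis
    by (rule Lim_transform_eventually)
       (use eventually_gt_at_top[of 0] in \<open>eventually_elim, simp add: partition_eq_cycle_sum\<close>)
qed

lemma boltzmann_factor_derivative:
  fixes k e t :: real
  assumes "k \<noteq> 0" "t \<noteq> 0"
  shows "((\<lambda>t. exp (- (1 / (k * t)) * e))
           has_real_derivative exp (- (1 / (k * t)) * e) * (e / (k * t^2))) (at t)"
  using assms by (auto intro!: derivative_eq_intros simp: power2_eq_square field_simps)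

lemma ln_boltzmann_sum_twice_differentiable:
  fixes E :: "'a \<Rightarrow> real"
  assumes "finite S" "S \<noteq> {}" "k \<noteq> 0"
  obtains D where
    "\<And>t. t \<noteq> 0 \<Longrightarrow>
       ((\<lambda>t. ln (\<Sum>s\<in>S. exp (- (1 / (k * t)) * E s))) has_real_derivative D t) (at t)"
    "\<And>t. t \<noteq> 0 \<Longrightarrow> D differentiable (at t)"
proof
  define Z where "Z = (\<lambda>t. \<Sum>s\<in>S. exp (- (1 / (k * t)) * E s))"
  define Z' where "Z' = (\<lambda>t. \<Sum>s\<in>S. exp (- (1 / (k * t)) * E s) * (E s / (k * t^2)))"
  have Z_pos: "0 < Z t" for t
    unfolding Z_def using assms(1,2) by (intro sum_pos) auto
  have Z': "(Z has_real_derivative Z' t) (at t)" if "t \<noteq> 0" for t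
    unfolding Z_def Z'_def using assms(3) that by (intro DERIV_sum boltzmann_factor_derivative)
  show "((\<lambda>t. ln (Z t)) has_real_derivative Z' t / Z t) (at t)" if "t \<noteq> 0" for t
    using Z'[OF that] Z_pos[of t] by (auto intro!: derivative_eq_intros simp: field_simps)
  show "(\<lambda>t. Z' t / Z t) differentiable (at t)" if "t \<noteq> 0" for t
  proof -
    have "(\<lambda>t. exp (- (1 / (k * t)) * E s)) differentiable (at t)" for s
      using boltzmann_factor_derivative[OF assms(3) that] real_differentiable_def by blast
    then have "Z' differentiable (at t)"
      unfolding Z'_def using assms(1,3) that by (intro derivative_intros) auto
    moreover have "Z differentiable (at t)"
      using Z'[OF that] real_differentiable_def by blast
    ultimately show ?thesis
      using Z_pos[of t] by (intro derivative_intros) auto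
  qed
qed

lemma thermodynamic_derivatives:
  fixes F g h :: "real \<Rightarrow> real"
  assumes F: "\<And>t. F t = - k * t * g t"
    and g: "\<And>t. 0 < t \<Longrightarrow> (g has_real_derivative h t) (at t)"
    and h: "h differentiable (at T)" and "0 < T"
  defines "U \<equiv> \<lambda>t. - (t^2) * deriv (\<lambda>s. F s / s) t"
  shows "U T = k * T^2 * deriv g T"
    and "deriv U T = 2 * k * T * deriv g T + k * T^2 * deriv (deriv g) T"
proof -
  have near_pos: "\<forall>\<^sub>F s in nhds t. 0 < s" if "0 < t" for t :: real
    using order_tendstoD(1)[OF filterlim_ident that] .
  have deriv_g: "deriv g t = h t" if "0 < t" for t
    using g[OF that] by (rule DERIV_imp_deriv)
  have U: "U t = k * t^2 * h t" if "0 < t" for t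
  proof -
    have "deriv (\<lambda>s. F s / s) t = deriv (\<lambda>s. - k * g s) t"
      by (rule deriv_cong_ev[OF eventually_mono[OF near_pos[OF that]] refl]) (simp add: F)
    also have "\<dots> = - k * h t"
      by (intro DERIV_imp_deriv DERIV_cmult g that)
    finally show ?thesis
      by (simp add: U_def)
  qed
  show "U T = k * T^2 * deriv g T"
    using U deriv_g \<open>0 < T\<close> by simp
  have "deriv U T = deriv (\<lambda>t. k * t^2 * h t) T"
    by (rule deriv_cong_ev[OF eventually_mono[OF near_pos[OF \<open>0 < T\<close>]] refl]) (simp add: U)
  also have "\<dots> = 2 * k * T * h T + k * T^2 * deriv h T"
    using h unfolding DERIV_deriv_iff_real_differentiable[symmetric]
    by (intro DERIV_imp_deriv) (auto intro!: derivative_eq_intros)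
  also have "deriv h T = deriv (deriv g) T"
    by (rule deriv_cong_ev[OF eventually_mono[OF near_pos[OF \<open>0 < T\<close>]] refl]) (simp add: deriv_g)
  finally show "deriv U T = 2 * k * T * deriv g T + k * T^2 * deriv (deriv g) T"
    using deriv_g[OF \<open>0 < T\<close>] by simp
qed

theorem theorem4:
  fixes kB J1 J2 J3 J4 J5 T :: real
  assumes "kB > 0" and "T > 0"
  defines "g \<equiv> (\<lambda>t. ln (lambda_max kB J1 J2 J3 J4 J5 t) / 4)"
  shows "((\<lambda>M. ln (partition kB J1 J2 J3 J4 J5 T M) / (4 * real M))
            \<longlonglongrightarrow> ln (lambda_max kB J1 J2 J3 J4 J5 T) / 4)
    \<and> (free_energy kB J1 J2 J3 J4 J5 T = - (kB * T / 4) * ln (lambda_max kB J1 J2 J3 J4 J5 T))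
    \<and> (internal_energy kB J1 J2 J3 J4 J5 T = kB * T^2 * deriv g T)
    \<and> (heat_capacity kB J1 J2 J3 J4 J5 T
           = 2 * kB * T * deriv g T + kB * T^2 * deriv (deriv g) T)"
proof -
  have limit: "(\<lambda>M. ln (partition kB J1 J2 J3 J4 J5 t M) / (4 * real M)) \<longlonglongrightarrow> g t" for t
    using tendsto_divide[OF ln_partition_over_length_tendsto tendsto_const[of 4]]
    by (simp add: g_def mult.commute)
  have F: "free_energy kB J1 J2 J3 J4 J5 t = - kB * t * g t" for t
    unfolding free_energy_def limI[OF limit] by simp
  obtain D where
    D: "\<And>t. t \<noteq> 0 \<Longrightarrow>
          ((\<lambda>t. ln (lambda_max kB J1 J2 J3 J4 J5 t)) has_real_derivative D t) (at t)"
    and D_differentiable: "\<And>t. t \<noteq> 0 \<Longrightarrow> D differentiable (at t)"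
    using ln_boltzmann_sum_twice_differentiable[OF finite_sign_vectors sign_vectors_nonempty,
        of "{..<4::nat}" kB "layer_energy J1 J2 J3 J4 J5", folded lambda_max_eq_sum] \<open>kB > 0\<close>
    by auto
  have g': "(g has_real_derivative D t / 4) (at t)" if "0 < t" for t
    unfolding g_def using that by (intro DERIV_cdivide D) simp
  have "(\<lambda>t. D t / 4) differentiable (at T)"
    using D_differentiable[of T] \<open>T > 0\<close> by (intro derivative_intros) auto
  note thermo = thermodynamic_derivatives[OF F g' this \<open>T > 0\<close>]
  have U: "internal_energy kB J1 J2 J3 J4 J5
      = (\<lambda>t. - (t^2) * deriv (\<lambda>s. free_energy kB J1 J2 J3 J4 J5 s / s) t)"
    by (simp add: fun_eq_iff internal_energy_def)
  show ?thesis
    using limit[of T] F[of T] thermo unfolding heat_capacity_def U by (simp add: g_def)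
qed

end
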